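(* There exists a binary Euclidean LCD $[29,11,9]$ code.
   Context: A binary $[n,k,d]$ code is a $k$-dimensional subspace $C\subseteq\mathbb{F}_2^n$ with minimum nonzero Hamming weight $d$; it is Euclidean LCD if $C\cap C^{\perp_E}=\{0\}$, where $C^{\perp_E}$ is the dual with respect to $\langle x,y\rangle_E=\sum x_iy_i$. *)

theory Defs
  imports "HOL-Analysis.Analysis" "HOL-Library.Z2"
begin

definition hamming_weight :: "bit ^ 'n \<Rightarrow> nat" where
  "hamming_weight x = card {i. x $ i \<noteq> 0}"

definition euclid_inner :: "bit ^ 'n \<Rightarrow> bit ^ 'n \<Rightarrow> bit" where
  "euclid_inner x y = (\<Sum>i\<in>UNIV. x $ i * y $ i)"

definition euclid_dual :: "(bit ^ 'n) set \<Rightarrow> (bit ^ 'n) set" where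
  "euclid_dual C = {y. \<forall>x\<in>C. euclid_inner x y = 0}"

definition min_distance :: "(bit ^ 'n) set \<Rightarrow> nat" where
  "min_distance C = Min (hamming_weight ` (C - {0}))"

definition binary_linear_code :: "nat \<Rightarrow> nat \<Rightarrow> nat \<Rightarrow> (bit ^ 'n) set \<Rightarrow> bool" where
  "binary_linear_code n k d C \<longleftrightarrow>
     CARD('n) = n \<and> vec.subspace C \<and> vec.dim C = k \<and> min_distance C = d"

definition euclidean_LCD :: "(bit ^ 'n) set \<Rightarrow> bool" where
  "euclidean_LCD C \<longleftrightarrow> C \<inter> euclid_dual C = {0}"

end

theory Submission
  imports Defs
begin

(* The code is spanned by eleven explicit words of length 29 that are orthonormal for the
   Euclidean inner product: each has odd weight and any two overlap in an even number of
   positions.  For x = \<Sum>\<^sub>g u\<^sub>g g this gives <g, x> = u\<^sub>g, so orthonormal words are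
   independent (dimension 11) and a codeword orthogonal to the whole code has all
   coefficients zero (LCD).  Minimum distance 9 is checked by running through all 2^11
   codewords. *)

declare add_bit_eq_xor [simp del] mult_bit_eq_and [simp del]

instance bit :: finite
  by standard (rule finite_subset[of _ "{0, 1}"], auto)

lemma hamming_weight_eq_0_iff: "hamming_weight x = 0 \<longleftrightarrow> x = 0"
  by (auto simp: hamming_weight_def vec_eq_iff)

lemma euclid_inner_zero_right [simp]: "euclid_inner x 0 = 0"
  by (simp add: euclid_inner_def)

lemma euclid_inner_sum_right:
  "euclid_inner x (\<Sum>v\<in>S. f v) = (\<Sum>v\<in>S. euclid_inner x (f v))"
  unfolding euclid_inner_def sum_component sum_distrib_left by (rule sum.swap)

lemma euclid_inner_scale_right: "euclid_inner x (c *s y) = c * euclid_inner x y"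
  unfolding euclid_inner_def vector_smult_component sum_distrib_left
  by (simp only: mult.left_commute)

lemma min_distance_eqI:
  assumes "\<And>c. c \<in> C \<Longrightarrow> c \<noteq> 0 \<Longrightarrow> d \<le> hamming_weight c"
    and "c \<in> C" "c \<noteq> 0" "hamming_weight c = d"
  shows "min_distance C = d"
  unfolding min_distance_def using assms by (intro Min_eqI) auto

lemma span_insert_bit:
  fixes a :: "bit ^ 'n"
  shows "vec.span (insert a S) = vec.span S \<union> (+) a ` vec.span S"
proof
  show "vec.span (insert a S) \<subseteq> vec.span S \<union> (+) a ` vec.span S"
  proof
    fix x assume "x \<in> vec.span (insert a S)"
    then obtain k where k: "x - k *s a \<in> vec.span S"
      by (auto simp: vec.span_insert)
    show "x \<in> vec.span S \<union> (+) a ` vec.span S"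
    proof (cases "k = 0")
      case True
      with k show ?thesis by simp
    next
      case False
      then have "x = a + (x - k *s a)"
        by simp
      with k show ?thesis by blast
    qed
  qed
next
  show "vec.span S \<union> (+) a ` vec.span S \<subseteq> vec.span (insert a S)"
    by (auto intro: vec.span_add vec.span_base set_rev_mp[OF _ vec.span_mono[OF subset_insertI]])
qed

definition orthonormal :: "(bit ^ 'n) set \<Rightarrow> bool" where
  "orthonormal S \<longleftrightarrow> (\<forall>x\<in>S. \<forall>y\<in>S. euclid_inner x y = (if x = y then 1 else 0))"

lemma orthonormal_inner_combination:
  assumes "orthonormal S" "x \<in> S"
  shows "euclid_inner x (\<Sum>v\<in>S. u v *s v) = u x"
proof -
  have "euclid_inner x (\<Sum>v\<in>S. u v *s v) = (\<Sum>v\<in>S. if x = v then u v else 0)"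
    using assms unfolding orthonormal_def
    by (intro trans[OF euclid_inner_sum_right] sum.cong) (simp_all add: euclid_inner_scale_right)
  also have "\<dots> = u x"
    using assms(2) by simp
  finally show ?thesis .
qed

lemma orthonormal_independent:
  assumes "orthonormal S"
  shows "vec.independent S"
proof -
  have "u v = 0" if "(\<Sum>v\<in>S. u v *s v) = 0" "v \<in> S" for u v
    using orthonormal_inner_combination[OF assms \<open>v \<in> S\<close>, of u] that(1) by simp
  then show ?thesis
    by (auto simp: vec.dependent_finite)
qed

lemma orthonormal_dim:
  "orthonormal S \<Longrightarrow> vec.dim S = card S"
  by (rule vec.dim_eq_card_independent[OF orthonormal_independent])

lemma orthonormal_span_LCD:
  assumes "orthonormal S"
  shows "euclidean_LCD (vec.span S)"
  unfolding euclidean_LCD_def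
proof
  show "vec.span S \<inter> euclid_dual (vec.span S) \<subseteq> {0}"
  proof
    fix x assume x: "x \<in> vec.span S \<inter> euclid_dual (vec.span S)"
    then obtain u where u: "x = (\<Sum>v\<in>S. u v *s v)"
      by (auto simp: vec.span_finite)
    have "u v = 0" if "v \<in> S" for v
      using x orthonormal_inner_combination[OF assms that, of u] vec.span_base[OF that]
      by (auto simp: u euclid_dual_def)
    then show "x \<in> {0}"
      by (simp add: u)
  qed
  show "{0} \<subseteq> vec.span S \<inter> euclid_dual (vec.span S)"
    by (simp add: vec.span_zero euclid_dual_def)
qed

definition list_weight :: "bit list \<Rightarrow> nat" where
  "list_weight xs = length (filter (\<lambda>b. b \<noteq> 0) xs)"

definition list_inner :: "bit list \<Rightarrow> bit list \<Rightarrow> bit" where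
  "list_inner xs ys = sum_list (map2 (*) xs ys)"

(* P holds for acc plus the sum of every sublist of gs; evaluating this does not build the
   list of all 2^(length gs) sums. *)
fun all_subset_sums :: "(bit list \<Rightarrow> bool) \<Rightarrow> bit list \<Rightarrow> bit list list \<Rightarrow> bool" where
  "all_subset_sums P acc [] = P acc"
| "all_subset_sums P acc (g # gs) =
     (all_subset_sums P acc gs \<and> all_subset_sums P (map2 (+) g acc) gs)"

locale list_coordinates =
  fixes h :: "'n::finite \<Rightarrow> nat"
  assumes bij: "bij_betw h UNIV {..<CARD('n)}"
begin

definition vec_of_list :: "bit list \<Rightarrow> bit ^ 'n" where
  "vec_of_list xs = (\<chi> i. xs ! h i)"

lemma range_coordinates: "range h = {..<CARD('n)}"
  using bij by (rule bij_betw_imp_surj_on)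

lemma coordinate_less: "h i < CARD('n)"
  using range_coordinates by auto

lemma card_coordinates: "card {i. P (h i)} = card {k. k < CARD('n) \<and> P k}"
proof (rule bij_betw_same_card)
  have "h ` {i. P (h i)} = {k. k < CARD('n) \<and> P k}"
    using range_coordinates by (auto simp flip: lessThan_iff)
  then show "bij_betw h {i. P (h i)} {k. k < CARD('n) \<and> P k}"
    by (intro bij_betw_subset[OF bij]) simp_all
qed

lemma hamming_weight_vec_of_list:
  "length xs = CARD('n) \<Longrightarrow> hamming_weight (vec_of_list xs) = list_weight xs"
  using card_coordinates[of "\<lambda>k. xs ! k \<noteq> 0"]
  by (simp add: hamming_weight_def vec_of_list_def list_weight_def length_filter_conv_card)

lemma euclid_inner_vec_of_list:
  assumes "length xs = CARD('n)" "length ys = CARD('n)"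
  shows "euclid_inner (vec_of_list xs) (vec_of_list ys) = list_inner xs ys"
proof -
  have "euclid_inner (vec_of_list xs) (vec_of_list ys) = (\<Sum>k<CARD('n). xs ! k * ys ! k)"
    unfolding euclid_inner_def vec_of_list_def vec_lambda_beta
    by (rule sum.reindex_bij_betw[OF bij, of "\<lambda>k. xs ! k * ys ! k"])
  also have "\<dots> = list_inner xs ys"
    using assms by (simp add: list_inner_def sum_list_sum_nth atLeast0LessThan)
  finally show ?thesis .
qed

lemma vec_of_list_map2_plus:
  assumes "length xs = CARD('n)" "length ys = CARD('n)"
  shows "vec_of_list (map2 (+) xs ys) = vec_of_list xs + vec_of_list ys"
  using assms coordinate_less by (simp add: vec_of_list_def vec_eq_iff)

lemma vec_of_list_inj: "inj_on vec_of_list {xs. length xs = CARD('n)}"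
proof
  fix xs ys
  assume xs: "xs \<in> {xs. length xs = CARD('n)}" and ys: "ys \<in> {xs. length xs = CARD('n)}"
    and "vec_of_list xs = vec_of_list ys"
  then have "\<forall>i. xs ! h i = ys ! h i"
    by (simp add: vec_of_list_def vec_eq_iff)
  then have "xs ! k = ys ! k" if "k < CARD('n)" for k
    using range_coordinates that by (metis lessThan_iff rangeE)
  with xs ys show "xs = ys"
    by (intro nth_equalityI) auto
qed

lemma all_subset_sums_span:
  assumes "all_subset_sums P acc gs" "y \<in> vec.span (vec_of_list ` set gs)"
    and "length acc = CARD('n)" "\<forall>g\<in>set gs. length g = CARD('n)"
  shows "\<exists>c. length c = CARD('n) \<and> P c \<and> vec_of_list c = vec_of_list acc + y"
  using assms
proof (induction gs arbitrary: acc y)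
  case Nil
  then show ?case
    by auto
next
  case (Cons g gs)
  from Cons.prems(2) consider "y \<in> vec.span (vec_of_list ` set gs)"
    | y' where "y' \<in> vec.span (vec_of_list ` set gs)" "y = vec_of_list g + y'"
    by (auto simp: span_insert_bit)
  then show ?case
  proof cases
    case 1
    with Cons show ?thesis
      by simp
  next
    case 2
    have "vec_of_list acc + y = vec_of_list (map2 (+) g acc) + y'"
      using Cons.prems 2 by (simp add: vec_of_list_map2_plus algebra_simps)
    moreover obtain c where "length c = CARD('n)" "P c"
      "vec_of_list c = vec_of_list (map2 (+) g acc) + y'"
      using Cons.IH[of "map2 (+) g acc" y'] Cons.prems 2 by auto
    ultimately show ?thesis
      by metis
  qed
qed

lemma orthonormal_vec_of_list:
  assumes "\<forall>g\<in>set G. length g = CARD('n)"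
    and "\<forall>a\<in>set G. \<forall>b\<in>set G. list_inner a b = (if a = b then 1 else 0)"
  shows "orthonormal (vec_of_list ` set G)"
proof -
  have "vec_of_list a = vec_of_list b \<longleftrightarrow> a = b" if "a \<in> set G" "b \<in> set G" for a b
    using vec_of_list_inj assms(1) that by (auto dest: inj_onD)
  with assms show ?thesis
    by (auto simp: orthonormal_def euclid_inner_vec_of_list)
qed

lemma min_distance_span_vec_of_list:
  assumes "\<forall>g\<in>set G. length g = CARD('n)"
    and "all_subset_sums (\<lambda>c. c = replicate CARD('n) 0 \<or> d \<le> list_weight c)
      (replicate CARD('n) 0) G"
    and "g \<in> set G" "list_weight g = d" "d > 0"
  shows "min_distance (vec.span (vec_of_list ` set G)) = d"
proof (rule min_distance_eqI)
  have zero: "vec_of_list (replicate CARD('n) 0) = 0"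
    using coordinate_less by (simp add: vec_of_list_def vec_eq_iff)
  fix c assume c: "c \<in> vec.span (vec_of_list ` set G)" "c \<noteq> 0"
  then obtain w where "length w = CARD('n)" "w = replicate CARD('n) 0 \<or> d \<le> list_weight w"
    "vec_of_list w = c"
    using all_subset_sums_span[OF assms(2) c(1)] assms(1) zero by auto
  with c(2) zero show "d \<le> hamming_weight c"
    by (auto simp: hamming_weight_vec_of_list)
next
  show "vec_of_list g \<in> vec.span (vec_of_list ` set G)"
    using assms(3) by (simp add: vec.span_base)
  show "hamming_weight (vec_of_list g) = d"
    using assms by (simp add: hamming_weight_vec_of_list)
  with assms(5) show "vec_of_list g \<noteq> 0"
    by (metis hamming_weight_eq_0_iff less_irrefl)
qed

end

definition generator_rows :: "bit list list" where
  "generator_rows = [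
    [0,0,1,0,0,0,1,1,1,0,1,0,0,1,0,0,1,1,1,0,0,1,0,0,1,0,0,0,0],
    [0,1,1,1,1,0,1,0,1,1,1,1,0,0,1,1,0,0,1,1,1,1,1,1,0,1,0,0,1],
    [1,1,1,0,1,1,0,0,0,1,0,0,0,0,1,1,0,0,0,1,1,1,1,0,0,1,0,1,1],
    [0,0,0,0,1,0,0,0,1,1,1,0,1,0,1,0,0,0,0,0,1,0,1,0,0,1,0,0,0],
    [1,1,1,1,0,1,0,1,1,1,0,0,0,1,0,0,0,1,0,0,1,0,0,0,1,1,1,0,1],
    [1,0,1,0,1,1,1,1,0,1,0,0,0,1,1,1,0,1,0,1,0,0,1,0,1,0,0,1,0],
    [0,1,1,0,0,1,0,0,1,0,0,0,0,0,0,1,1,0,0,1,1,0,0,1,1,0,1,1,1],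
    [1,0,0,0,1,1,0,1,1,0,1,1,1,1,0,1,1,0,1,1,0,1,0,0,1,0,0,0,0],
    [0,1,1,1,1,1,1,1,0,0,1,0,1,0,1,0,1,0,1,1,1,0,0,0,0,1,0,1,1],
    [0,1,0,1,1,1,1,0,0,1,1,1,0,0,0,1,0,1,0,0,1,0,1,1,1,1,0,0,0],
    [1,1,0,1,1,0,0,1,0,0,1,1,1,1,0,0,0,1,1,1,0,0,0,0,1,1,0,1,0]]"

lemma length_generator_rows: "length generator_rows = 11"
  by (simp add: generator_rows_def)

lemma generator_row_lengths: "\<forall>g\<in>set generator_rows. length g = 29"
  by (simp add: generator_rows_def)

lemma distinct_generator_rows: "distinct generator_rows"
  by (simp add: generator_rows_def)

lemma generator_rows_orthonormal:
  "\<forall>a\<in>set generator_rows. \<forall>b\<in>set generator_rows. list_inner a b = (if a = b then 1 else 0)"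
  by (simp add: generator_rows_def list_inner_def)

lemma generator_rows_subset_sum_weights:
  "all_subset_sums (\<lambda>c. c = replicate 29 0 \<or> 9 \<le> list_weight c) (replicate 29 0) generator_rows"
  by code_simp

lemma list_weight_generator_row_3: "list_weight (generator_rows ! 3) = 9"
  by (simp add: generator_rows_def list_weight_def)

theorem proposition4p5:
  shows "\<exists>C :: (bit ^ 29) set. binary_linear_code 29 11 9 C \<and> euclidean_LCD C"
proof -
  obtain h :: "29 \<Rightarrow> nat" where "bij_betw h UNIV {..<CARD(29)}"
    using ex_bij_betw_finite_nat[of "UNIV :: 29 set"] by (auto simp: atLeast0LessThan)
  then interpret list_coordinates h
    by unfold_locales
  let ?S = "vec_of_list ` set generator_rows"
  have orthonormal: "orthonormal ?S"
    using generator_row_lengths generator_rows_orthonormal by (intro orthonormal_vec_of_list) simp_all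
  have "inj_on vec_of_list (set generator_rows)"
    using generator_row_lengths by (intro inj_on_subset[OF vec_of_list_inj]) auto
  then have card: "card ?S = 11"
    by (simp add: card_image distinct_card[OF distinct_generator_rows] length_generator_rows)
  have min_distance: "min_distance (vec.span ?S) = 9"
    using generator_row_lengths generator_rows_subset_sum_weights list_weight_generator_row_3
    by (intro min_distance_span_vec_of_list[where g = "generator_rows ! 3"])
      (simp_all add: length_generator_rows)
  show ?thesis
    using orthonormal card min_distance
    by (intro exI[of _ "vec.span ?S"])
      (simp add: binary_linear_code_def orthonormal_dim orthonormal_span_LCD)
qed

end
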